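(* Let $H\le\mathrm{GL}_n(q)$ and suppose that with respect to a basis $\{v_1,\dots,v_n\}$ of $V=\mathbb{F}_q^n$, every $g\in H$ has the block upper-triangular form $$\begin{pmatrix} g_k & g_{k,k-1} & \cdots & g_{k,1}\\ 0 & g_{k-1} & \cdots & g_{k-1,1}\\ \vdots & & \ddots & \vdots\\ 0 & 0 & \cdots & g_1\end{pmatrix},$$ where each $g\mapsto g_i\in\mathrm{GL}_{n_i}(q)$ is an irreducible representation of $H$ and $n_1+\dots+n_k=n$, and suppose $n_1<n$, so that $H$ stabilises $U=\langle v_{n-n_1+1},\dots,v_n\rangle$. Then there exists $z\in\mathrm{SL}_n(q)$ such that $D(\mathrm{GL}_n(q))\cap H^z\le Z(\mathrm{GL}_n(q))$.
   Context: Matrices act on row vectors from the right. $D(\mathrm{GL}_n(q))$ denotes the diagonal matrices with respect to $\{v_1,\dots,v_n\}$, $Z(\mathrm{GL}_n(q))$ the scalar matrices, and $H^z=z^{-1}Hz$. *)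

theory Defs
  imports "Jordan_Normal_Form.Determinant"
begin

text \<open>Matrices act on row vectors from the right: v g.\<close>
definition row_act :: "'a::comm_semiring_0 vec \<Rightarrow> 'a mat \<Rightarrow> 'a vec" where
  "row_act v A = transpose_mat A *\<^sub>v v"

definition subgroup_GL :: "nat \<Rightarrow> 'a::field mat set \<Rightarrow> bool" where
  "subgroup_GL n H \<longleftrightarrow>
     H \<subseteq> carrier_mat n n \<and> 1\<^sub>m n \<in> H \<and>
     (\<forall>g\<in>H. \<forall>h\<in>H. g * h \<in> H) \<and>
     (\<forall>g\<in>H. \<exists>h\<in>H. g * h = 1\<^sub>m n \<and> h * g = 1\<^sub>m n)"

definition is_subspace :: "nat \<Rightarrow> 'a::field vec set \<Rightarrow> bool" where
  "is_subspace m W \<longleftrightarrow> W \<subseteq> carrier_vec m \<and> 0\<^sub>v m \<in> W \<and>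
     (\<forall>v\<in>W. \<forall>w\<in>W. v + w \<in> W) \<and> (\<forall>c. \<forall>v\<in>W. c \<cdot>\<^sub>v v \<in> W)"

definition irreducible_rep :: "nat \<Rightarrow> 'b set \<Rightarrow> ('b \<Rightarrow> 'a::field mat) \<Rightarrow> bool" where
  "irreducible_rep m H \<rho> \<longleftrightarrow> 0 < m \<and>
     (\<forall>W. is_subspace m W \<and> (\<forall>g\<in>H. \<forall>w\<in>W. row_act w (\<rho> g) \<in> W)
          \<longrightarrow> W = {0\<^sub>v m} \<or> W = carrier_vec m)"

text \<open>Block data: ns = [n_1, ..., n_k]. The block g_i (i = 1..k, list index i-1)
  occupies rows/columns  blk_off n ns (i-1) .. blk_off n ns (i-1) + n_i - 1,
  so g_1 sits in the bottom right corner and g_k in the top left corner.\<close>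
definition blk_off :: "nat \<Rightarrow> nat list \<Rightarrow> nat \<Rightarrow> nat" where
  "blk_off n ns i = n - sum_list (take (Suc i) ns)"

definition diag_block :: "nat \<Rightarrow> nat list \<Rightarrow> nat \<Rightarrow> 'a mat \<Rightarrow> 'a mat" where
  "diag_block n ns i g =
     mat (ns ! i) (ns ! i) (\<lambda>(r, c). g $$ (blk_off n ns i + r, blk_off n ns i + c))"

text \<open>Block upper triangular: the block in block-row i, block-column j vanishes
  whenever block-row i lies below block-column j (i.e. i < j with our numbering).\<close>
definition block_upper_tri :: "nat \<Rightarrow> nat list \<Rightarrow> 'a::zero mat \<Rightarrow> bool" where
  "block_upper_tri n ns g \<longleftrightarrow>
     (\<forall>i j r c. i < j \<and> j < length ns \<and> r < ns ! i \<and> c < ns ! j \<longrightarrow>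
        g $$ (blk_off n ns i + r, blk_off n ns j + c) = 0)"

end

theory Submission
  imports Defs
begin

text \<open>
  Only the invariance of U = <v_(m+1), ..., v_n>, m = n - n_1, under H is used. Let N be the matrix with ones in rows
  m+1..n and columns 1..m and zeros elsewhere, so N^2 = 0, and take z = 1 - N, whose inverse
  is 1 + N. If z^-1 h z is diagonal with entries d_i, the rows w_i of 1 + N satisfy
  w_i h = d_i w_i, where w_i = v_i for i \<le> m and w_j = v_j + (v_1 + ... + v_m) for j > m.
  Reducing w_j h = d_j w_j modulo U gives d_1 v_1 + ... + d_m v_m = d_j (v_1 + ... + v_m),
  so all d_i agree.
\<close>

lemma sum_list_take_interval:
  fixes ns :: "nat list"
  assumes "x < sum_list ns"
  shows "\<exists>j<length ns. sum_list (take j ns) \<le> x \<and> x < sum_list (take (Suc j) ns)"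
  using assms
proof (induction ns arbitrary: x)
  case (Cons a ns)
  show ?case
  proof (cases "x < a")
    case True
    then show ?thesis
      by (intro exI[of _ 0]) simp
  next
    case False
    with Cons.prems have "x - a < sum_list ns"
      by simp
    with Cons.IH obtain j where "j < length ns" "sum_list (take j ns) \<le> x - a"
      "x - a < sum_list (take (Suc j) ns)"
      by blast
    with False show ?thesis
      by (intro exI[of _ "Suc j"]) (simp, arith)
  qed
qed simp

lemma blk_off_add_nth:
  assumes "sum_list ns = n" "j < length ns"
  shows "blk_off n ns j + ns ! j = n - sum_list (take j ns)"
proof -
  have "sum_list (take (Suc j) ns) \<le> n"
    using assms(1) by (metis append_take_drop_id le_add1 sum_list_append)
  then show ?thesis
    using assms(2) by (simp add: blk_off_def take_Suc_conv_app_nth)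
qed

lemma block_upper_tri_lower_left_zero:
  assumes "sum_list ns = n" "ns \<noteq> []" "block_upper_tri n ns g"
    and "n - hd ns \<le> r" "r < n" "c < n - hd ns"
  shows "g $$ (r, c) = 0"
proof -
  have "n - Suc c < sum_list ns"
    using assms(1,6) by linarith
  then obtain j where j: "j < length ns" "sum_list (take j ns) \<le> n - Suc c"
    "n - Suc c < sum_list (take (Suc j) ns)"
    using sum_list_take_interval by blast
  have c_in_block: "blk_off n ns j \<le> c" "c - blk_off n ns j < ns ! j"
    using j blk_off_add_nth[OF assms(1) j(1)] assms(6) by (auto simp: blk_off_def)
  have "j \<noteq> 0"
  proof
    assume "j = 0"
    with j(3) assms(2) have "n - Suc c < hd ns"
      by (cases ns) auto
    with assms(6) show False
      by linarith
  qed
  have first_block: "blk_off n ns 0 = n - hd ns" "ns ! 0 = hd ns"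
    using assms(2) by (auto simp: blk_off_def hd_conv_nth take_Suc_conv_app_nth)
  have "r - (n - hd ns) < ns ! 0"
    using assms(4,5) first_block(2) by linarith
  with assms(3) j(1) \<open>j \<noteq> 0\<close> c_in_block(2)
  have "g $$ (blk_off n ns 0 + (r - (n - hd ns)), blk_off n ns j + (c - blk_off n ns j)) = 0"
    unfolding block_upper_tri_def by blast
  moreover have "blk_off n ns 0 + (r - (n - hd ns)) = r" "blk_off n ns j + (c - blk_off n ns j) = c"
    using first_block(1) assms(4) c_in_block(1) by linarith+
  ultimately show ?thesis
    by metis
qed

lemma index_mult_mat_sum:
  assumes "A \<in> carrier_mat n k" "B \<in> carrier_mat k p" "i < n" "j < p"
  shows "(A * B) $$ (i, j) = (\<Sum>l<k. A $$ (i, l) * B $$ (l, j))"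
  using assms by (auto simp: scalar_prod_def atLeast0LessThan intro: sum.cong)

definition lower_left_ones :: "nat \<Rightarrow> nat \<Rightarrow> 'a::{zero, one} mat" where
  "lower_left_ones n m = mat n n (\<lambda>(i, j). if m \<le> i \<and> j < m then 1 else 0)"

lemma lower_left_ones_dim [simp]:
  "dim_row (lower_left_ones n m) = n" "dim_col (lower_left_ones n m) = n"
  by (simp_all add: lower_left_ones_def)

lemma lower_left_ones_carrier [simp]: "lower_left_ones n m \<in> carrier_mat n n"
  by (simp add: lower_left_ones_def)

lemma lower_left_ones_index [simp]:
  "i < n \<Longrightarrow> j < n \<Longrightarrow> lower_left_ones n m $$ (i, j) = (if m \<le> i \<and> j < m then 1 else 0)"
  by (simp add: lower_left_ones_def)

lemma lower_left_ones_square: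
  "lower_left_ones n m * lower_left_ones n m = (0\<^sub>m n n :: 'a::semiring_1 mat)"
proof (rule eq_matI)
  fix i j assume ij: "i < dim_row (0\<^sub>m n n :: 'a mat)" "j < dim_col (0\<^sub>m n n :: 'a mat)"
  then have "(lower_left_ones n m * lower_left_ones n m) $$ (i, j) =
      (\<Sum>k<n. lower_left_ones n m $$ (i, k) * lower_left_ones n m $$ (k, j) :: 'a)"
    by (intro index_mult_mat_sum) auto
  also have "\<dots> = 0"
    using ij by (intro sum.neutral) auto
  finally show "(lower_left_ones n m * lower_left_ones n m) $$ (i, j) = (0\<^sub>m n n :: 'a mat) $$ (i, j)"
    using ij by simp
qed simp_all

lemma square_zero_unipotent_inverse:
  fixes N :: "'a::ring_1 mat"
  assumes N: "N \<in> carrier_mat n n" and NN: "N * N = 0\<^sub>m n n"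
  shows "(1\<^sub>m n + N) * (1\<^sub>m n - N) = 1\<^sub>m n" "(1\<^sub>m n - N) * (1\<^sub>m n + N) = 1\<^sub>m n"
proof -
  have "(1\<^sub>m n + N) * (1\<^sub>m n - N) = 1\<^sub>m n * (1\<^sub>m n - N) + N * (1\<^sub>m n - N)"
    using N by (intro add_mult_distrib_mat[of _ n n]) auto
  also have "\<dots> = (1\<^sub>m n - N) + (N - N * N)"
    using N by (subst mult_minus_distrib_mat[of N n n]) auto
  finally show "(1\<^sub>m n + N) * (1\<^sub>m n - N) = 1\<^sub>m n"
    using N NN by (auto intro!: eq_matI)
  have "(1\<^sub>m n - N) * (1\<^sub>m n + N) = 1\<^sub>m n * (1\<^sub>m n + N) - N * (1\<^sub>m n + N)"
    using N by (intro minus_mult_distrib_mat[of _ n n]) auto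
  also have "\<dots> = (1\<^sub>m n + N) - (N + N * N)"
    using N by (subst mult_add_distrib_mat[of N n n]) auto
  finally show "(1\<^sub>m n - N) * (1\<^sub>m n + N) = 1\<^sub>m n"
    using N NN by (auto intro!: eq_matI)
qed

lemma det_one_minus_lower_left_ones:
  "det (1\<^sub>m n - lower_left_ones n m :: 'a::comm_ring_1 mat) = 1"
proof -
  have "det (1\<^sub>m n - lower_left_ones n m :: 'a mat) = prod_list (diag_mat (1\<^sub>m n - lower_left_ones n m))"
    by (rule det_lower_triangular[of n]) auto
  also have "diag_mat (1\<^sub>m n - lower_left_ones n m :: 'a mat) = replicate n 1"
    by (rule nth_equalityI) (auto simp: diag_mat_def)
  finally show ?thesis
    by simp
qed

lemma diagonal_mult_index:
  assumes "diagonal_mat A" "A \<in> carrier_mat n n" "B \<in> carrier_mat n p" "i < n" "j < p"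
  shows "(A * B) $$ (i, j) = A $$ (i, i) * B $$ (i, j)"
proof -
  have "(A * B) $$ (i, j) = (\<Sum>k<n. A $$ (i, k) * B $$ (k, j))"
    by (rule index_mult_mat_sum[OF assms(2-5)])
  also have "\<dots> = (\<Sum>k<n. if k = i then A $$ (i, k) * B $$ (k, j) else 0)"
    using assms by (intro sum.cong) (auto simp: diagonal_mat_def)
  finally show ?thesis
    using assms(4) by simp
qed

lemma one_plus_lower_left_ones_mult_index:
  fixes h :: "'a::semiring_1 mat"
  assumes "h \<in> carrier_mat n p" "m \<le> n" "i < n" "j < p"
  shows "((1\<^sub>m n + lower_left_ones n m) * h) $$ (i, j) =
    h $$ (i, j) + (if m \<le> i then \<Sum>k<m. h $$ (k, j) else 0)"
proof -
  have "((1\<^sub>m n + lower_left_ones n m) * h) $$ (i, j) =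
      (\<Sum>k<n. (1\<^sub>m n + lower_left_ones n m) $$ (i, k) * h $$ (k, j))"
    using assms by (intro index_mult_mat_sum) auto
  also have "\<dots> = (\<Sum>k<n. (if k = i then h $$ (k, j) else 0) + (if m \<le> i \<and> k < m then h $$ (k, j) else 0))"
    using assms(3) by (intro sum.cong) (auto simp: distrib_right)
  also have "\<dots> = h $$ (i, j) + (\<Sum>k<n. if m \<le> i \<and> k < m then h $$ (k, j) else 0)"
    using assms(3) by (simp add: sum.distrib)
  also have "(\<Sum>k<n. if m \<le> i \<and> k < m then h $$ (k, j) else 0) = (if m \<le> i then \<Sum>k<m. h $$ (k, j) else 0)"
    using assms(2) by (simp add: sum.If_cases lessThan_subset_iff Int_absorb1 flip: lessThan_def)
  finally show ?thesis .
qed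

lemma diagonal_mat_eq_smult_one:
  fixes A :: "'a::semiring_1 mat"
  assumes "A \<in> carrier_mat n n" "diagonal_mat A" "\<And>i. i < n \<Longrightarrow> A $$ (i, i) = c"
  shows "A = c \<cdot>\<^sub>m 1\<^sub>m n"
  by (rule eq_matI) (use assms in \<open>auto simp: diagonal_mat_def\<close>)

lemma diagonal_conjugate_by_lower_left_shear_rows:
  fixes h :: "'a::ring_1 mat" and n m :: nat
  defines "N \<equiv> lower_left_ones n m"
  assumes h: "h \<in> carrier_mat n n" and "m \<le> n"
    and diag: "diagonal_mat ((1\<^sub>m n + N) * h * (1\<^sub>m n - N))" and ij: "i < n" "j < n"
  shows "h $$ (i, j) + (if m \<le> i then \<Sum>k<m. h $$ (k, j) else 0) =
    ((1\<^sub>m n + N) * h * (1\<^sub>m n - N)) $$ (i, i) * (1\<^sub>m n + N) $$ (i, j)"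
proof -
  define A where "A = (1\<^sub>m n + N) * h * (1\<^sub>m n - N)"
  have N: "N \<in> carrier_mat n n"
    by (simp add: N_def)
  have A: "A \<in> carrier_mat n n"
    unfolding A_def by (meson h N add_carrier_mat minus_carrier_mat mult_carrier_mat one_carrier_mat)
  have "A * (1\<^sub>m n + N) = (1\<^sub>m n + N) * h * ((1\<^sub>m n - N) * (1\<^sub>m n + N))"
    unfolding A_def using h N by (metis assoc_mult_mat add_carrier_mat minus_carrier_mat mult_carrier_mat one_carrier_mat)
  also have "(1\<^sub>m n - N) * (1\<^sub>m n + N) = 1\<^sub>m n"
    using square_zero_unipotent_inverse(2)[OF N] by (simp add: N_def lower_left_ones_square)
  finally have eigen: "(1\<^sub>m n + N) * h = A * (1\<^sub>m n + N)"
    using h N by (simp add: right_mult_one_mat[of _ n n])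
  have "h $$ (i, j) + (if m \<le> i then \<Sum>k<m. h $$ (k, j) else 0) = ((1\<^sub>m n + N) * h) $$ (i, j)"
    using one_plus_lower_left_ones_mult_index[OF h \<open>m \<le> n\<close> ij] by (simp add: N_def)
  also have "\<dots> = (A * (1\<^sub>m n + N)) $$ (i, j)"
    by (simp only: eigen)
  also have "\<dots> = A $$ (i, i) * (1\<^sub>m n + N) $$ (i, j)"
    using diagonal_mult_index[OF diag[folded A_def] A _ ij] N by simp
  finally show ?thesis
    unfolding A_def .
qed

lemma diagonal_conjugate_by_lower_left_shear_is_scalar:
  fixes h :: "'a::ring_1 mat" and n m :: nat
  defines "N \<equiv> lower_left_ones n m"
  assumes h: "h \<in> carrier_mat n n" and m: "0 < m" "m < n"
    and stable: "\<And>i j. m \<le> i \<Longrightarrow> i < n \<Longrightarrow> j < m \<Longrightarrow> h $$ (i, j) = 0"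
    and diag: "diagonal_mat ((1\<^sub>m n + N) * h * (1\<^sub>m n - N))"
  shows "\<exists>c. (1\<^sub>m n + N) * h * (1\<^sub>m n - N) = c \<cdot>\<^sub>m 1\<^sub>m n"
proof -
  define d where "d i = ((1\<^sub>m n + N) * h * (1\<^sub>m n - N)) $$ (i, i)" for i
  have rows: "h $$ (i, j) + (if m \<le> i then \<Sum>k<m. h $$ (k, j) else 0) = d i * (1\<^sub>m n + N) $$ (i, j)"
    if "i < n" "j < n" for i j
    using diagonal_conjugate_by_lower_left_shear_rows[OF h _ diag[unfolded N_def] that] m
    by (simp add: d_def N_def)
  have top: "h $$ (i, j) = (if i = j then d i else 0)" if "i < m" "j < n" for i j
    using rows[of i j] that m by (simp add: N_def)
  have column_sum: "(\<Sum>k<m. h $$ (k, j)) = d j" if "j < m" for j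
  proof -
    have "(\<Sum>k<m. h $$ (k, j)) = (\<Sum>k<m. if k = j then d k else 0)"
      using that m by (intro sum.cong) (auto simp: top)
    with that show ?thesis
      by simp
  qed
  have bottom: "d i = d j" if "m \<le> i" "i < n" "j < m" for i j
    using rows[of i j] stable[OF that] column_sum[OF that(3)] that by (simp add: N_def)
  have "d i = d 0" if "i < n" for i
    using bottom[of m i] bottom[of m 0] bottom[of i 0] that m by (cases "i < m") auto
  moreover have "(1\<^sub>m n + N) * h * (1\<^sub>m n - N) \<in> carrier_mat n n"
    unfolding N_def
    by (meson h lower_left_ones_carrier add_carrier_mat minus_carrier_mat mult_carrier_mat one_carrier_mat)
  ultimately show ?thesis
    using diagonal_mat_eq_smult_one diag unfolding d_def by blast
qed

theorem mainTheorem11: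
  fixes H :: "'a::{finite, field} mat set"
    and n :: nat
    and ns :: "nat list"
  assumes "subgroup_GL n H"
    and "ns \<noteq> []"
    and "\<forall>i<length ns. 0 < ns ! i"
    and "sum_list ns = n"
    and "\<forall>g\<in>H. block_upper_tri n ns g"
    and "\<forall>i<length ns. irreducible_rep (ns ! i) H (diag_block n ns i)"
    and "hd ns < n"
  shows "\<exists>z \<in> carrier_mat n n. \<exists>zi \<in> carrier_mat n n.
           z * zi = 1\<^sub>m n \<and> zi * z = 1\<^sub>m n \<and> det z = 1 \<and>
           (\<forall>h\<in>H. diagonal_mat (zi * h * z) \<longrightarrow> (\<exists>c. zi * h * z = c \<cdot>\<^sub>m 1\<^sub>m n))"
proof -
  define m where "m = n - hd ns"
  define N :: "'a mat" where "N = lower_left_ones n m"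
  have m: "0 < m" "m < n"
    using assms(2,3,7) by (auto simp: m_def hd_conv_nth)
  have N: "N \<in> carrier_mat n n"
    by (simp add: N_def)
  have "\<exists>c. (1\<^sub>m n + N) * h * (1\<^sub>m n - N) = c \<cdot>\<^sub>m 1\<^sub>m n"
    if h: "h \<in> H" and diag: "diagonal_mat ((1\<^sub>m n + N) * h * (1\<^sub>m n - N))" for h
  proof -
    have "h \<in> carrier_mat n n"
      using h assms(1) by (auto simp: subgroup_GL_def)
    moreover have "h $$ (i, j) = 0" if "m \<le> i" "i < n" "j < m" for i j
      using block_upper_tri_lower_left_zero[OF assms(4,2)] assms(5) h that unfolding m_def by blast
    ultimately show ?thesis
      using diagonal_conjugate_by_lower_left_shear_is_scalar[of h n m] m diag unfolding N_def by blast
  qed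
  moreover have "(1\<^sub>m n - N) * (1\<^sub>m n + N) = 1\<^sub>m n" "(1\<^sub>m n + N) * (1\<^sub>m n - N) = 1\<^sub>m n"
    using square_zero_unipotent_inverse[OF N] by (simp_all add: N_def lower_left_ones_square)
  moreover have "det (1\<^sub>m n - N) = 1"
    by (simp add: N_def det_one_minus_lower_left_ones)
  ultimately show ?thesis
    using N by (intro bexI[of _ "1\<^sub>m n - N"] bexI[of _ "1\<^sub>m n + N"]) auto
qed

end
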